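(* Let $N\ge 2$, $\sigma>0$, $f_D>0$, and let $\mu_2,\dots,\mu_N\in[0,1)$. Consider the $N$-port fluid antenna system (FAS) channel model described in the context, with selected envelope $|h_{\mathrm{FAS}}|=\max\{|h_1|,\dots,|h_N|\}$. Then for every threshold $x_{\rm th}>0$ the level crossing rate of $|h_{\mathrm{FAS}}|$ is \begin{align*} L(x_{\rm th})&=\frac{\sqrt{2\pi}\,x_{\rm th}f_D}{\sigma} \Biggl\{ e^{-\frac{x_{\rm th}^2}{\sigma ^2}} \prod _{k=2}^N \left[ 1-Q_1 \left( \sqrt{\tfrac{2\mu_k^2}{\sigma ^{2}(1-\mu _{k}^{2})}}\, x_{\rm th} , \sqrt{\tfrac{2}{\sigma ^{2}(1-\mu _{k}^{2})}}\, x_{\rm th} \right) \right] \\ &\quad + \sum_{i=2}^N \frac {1}{1-\mu _i^{2}}e^{-\frac {x_{\rm th}^{2}}{\sigma ^{2}(1-\mu _i^{2})}} \int_0^{x_{\rm th}} \frac{2x_1}{\sigma^2}e^{-\frac{x_1^2}{\sigma ^{2}(1-\mu _i^{2})}} I_{0}\!\left ({\frac {2\mu _ix_{\rm th}x_1}{\sigma ^{2}(1-\mu _i^{2})}}\right) \\ &\qquad\qquad \times \prod _{\substack{k=2 \\ k \neq i}}^N \left[ 1-Q_1 \left( \sqrt{\tfrac{2\mu_k^2}{\sigma ^{2}(1-\mu _{k}^{2})}}\, x_1 , \sqrt{\tfrac{2}{\sigma ^{2}(1-\mu _{k}^{2})}}\, x_{\rm th} \right) \right]dx_1 \Biggr\},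 \end{align*} where $Q_1(a,b)$ is the first-order Marcum $Q$-function and $I_0$ is the zero-order modified Bessel function of the first kind.
   Context: FAS channel model: a receiver has $N$ ports; the channels are $h_1=\sigma x_0+j\sigma y_0$ and $h_k=\sigma(\sqrt{1-\mu_k^2}\,x_k+\mu_k x_0)+j\sigma(\sqrt{1-\mu_k^2}\,y_k+\mu_k y_0)$ for $k=2,\dots,N$, where $x_0,\dots,x_N,y_0,\dots,y_N$ are independent real Gaussian random variables with mean $0$ and variance $1/2$; thus $\mathbb{E}|h_k|^2=\sigma^2$. (In the paper's setting $\mu_k=J_0\!\left(\frac{2\pi(k-1)}{N-1}W\right)$ for a normalized aperture $W$, $J_0$ the Bessel function of the first kind of order zero.) With the convention $\mu_1:=0$, the joint density of the envelopes is $p_{|h_1|,\dots,|h_N|}(x_1,\dots,x_N)=\prod_{k=1}^N \frac{2x_k}{\sigma^2(1-\mu_k^2)}e^{-\frac{x_k^2+\mu_k^2x_1^2}{\sigma^2(1-\mu_k^2)}}I_0\!\left(\frac{2\mu_kx_1x_k}{\sigma^2(1-\mu_k^2)}\right)$ for $x_1,\dots,x_N\ge 0$. The FAS selects $|h_{\rm FAS}|=\max_k|h_k|$. Level crossing rate (LCR): the time derivative $|\dot h_i|$ of the envelope at each port $i$ (at an arbitrary instant) is modeled as a zero-mean Gaussian with density $p_{|\dot h_i|}$ and variance $\pi^2\sigma^2f_D^2$, where $f_D$ is the maximum Doppler frequency. The joint density of the derivative and value of the selected envelope is taken to be $p_{|\dot h|,|h|}(\dot x,x)=\sum_{i=1}^N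 p_{|\dot h_i|}(\dot x)\int_{[0,x]^{N-1}} p_{|h_1|,\dots,|h_N|}(x_1,\dots,x_{i-1},x,x_{i+1},\dots,x_N)\prod_{k\ne i}dx_k$, and the LCR at threshold $x_{\rm th}$ is $L(x_{\rm th})=\int_0^\infty \dot x\, p_{|\dot h|,|h|}(\dot x,x_{\rm th})\,d\dot x$. *)

theory Defs
  imports "HOL-Probability.Probability"
begin

definition bessel_I0 :: "real \<Rightarrow> real" where
  "bessel_I0 x = (\<Sum>n. (x / 2) ^ (2 * n) / (fact n)\<^sup>2)"

definition marcum_Q1 :: "real \<Rightarrow> real \<Rightarrow> real" where
  "marcum_Q1 a b = (LINT t:{b..}|lborel. t * exp (-(t\<^sup>2 + a\<^sup>2) / 2) * bessel_I0 (a * t))"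

definition fas_mu :: "(nat \<Rightarrow> real) \<Rightarrow> nat \<Rightarrow> real" where
  "fas_mu mu k = (if k = 1 then 0 else mu k)"

definition fas_env_pdf :: "nat \<Rightarrow> real \<Rightarrow> (nat \<Rightarrow> real) \<Rightarrow> (nat \<Rightarrow> real) \<Rightarrow> real" where
  "fas_env_pdf N \<sigma> mu x =
     (\<Prod>k\<in>{1..N}. let m = fas_mu mu k in
        2 * x k / (\<sigma>\<^sup>2 * (1 - m\<^sup>2))
        * exp (- ((x k)\<^sup>2 + m\<^sup>2 * (x 1)\<^sup>2) / (\<sigma>\<^sup>2 * (1 - m\<^sup>2)))
        * bessel_I0 (2 * m * x 1 * x k / (\<sigma>\<^sup>2 * (1 - m\<^sup>2))))"

text \<open>Joint density of derivative and value of the selected envelope max_k |h_k|.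
  The envelope derivative at each port is zero-mean Gaussian with variance pi^2 sigma^2 f_D^2.\<close>
definition fas_joint_pdf :: "nat \<Rightarrow> real \<Rightarrow> real \<Rightarrow> (nat \<Rightarrow> real) \<Rightarrow> real \<Rightarrow> real \<Rightarrow> real" where
  "fas_joint_pdf N \<sigma> fD mu xd x =
     (\<Sum>i\<in>{1..N}. normal_density 0 (pi * \<sigma> * fD) xd *
        (LINT y:(PiE ({1..N} - {i}) (\<lambda>_. {0..x}))|(PiM ({1..N} - {i}) (\<lambda>_. lborel)).
            fas_env_pdf N \<sigma> mu (y(i := x))))"

definition fas_lcr :: "nat \<Rightarrow> real \<Rightarrow> real \<Rightarrow> (nat \<Rightarrow> real) \<Rightarrow> real \<Rightarrow> real" where
  "fas_lcr N \<sigma> fD mu xth = (LINT xd:{0..}|lborel. xd * fas_joint_pdf N \<sigma> fD mu xd xth)"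

end

theory Submission
  imports Defs
begin

text \<open>Given \<open>|h\<^sub>1| = u\<close>, the envelopes \<open>|h\<^sub>2|, ..., |h\<^sub>N|\<close> are independent with Rician
  densities, so the joint envelope density is a Rayleigh density in \<open>u\<close> times a product of
  conditional Rician densities. Integrating it over the box where all ports but \<open>i\<close> stay
  below the threshold therefore factorises into conditional Rician CDFs, each of which is
  \<open>1 - Q\<^sub>1\<close> after rescaling to the normalised Rice density. For \<open>i = 1\<close> the box integral is
  directly such a product; for \<open>i \<ge> 2\<close> the integral over \<open>u\<close> remains. The derivative only
  contributes the mean \<open>\<pi> \<sigma> f\<^sub>D / \<surd>(2\<pi>)\<close> of its half-normal part.\<close>

lemma set_integral_nonneg_eq_nn_integral:
  fixes f :: "'a \<Rightarrow> real"
  assumes [measurable]: "A \<in> sets M" "f \<in> borel_measurable M" and "\<And>x. x \<in> A \<Longrightarrow> 0 \<le> f x"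
  shows "(LINT x:A|M. f x) = enn2real (\<integral>\<^sup>+x. ennreal (indicator A x * f x) \<partial>M)"
  unfolding set_lebesgue_integral_def real_scaleR_def
proof (rule integral_eq_nn_integral)
  show "(\<lambda>x. indicator A x * f x) \<in> borel_measurable M"
    by measurable
  show "AE x in M. 0 \<le> indicator A x * f x"
    using assms(3) by (auto simp: indicator_def)
qed

lemma (in product_sigma_finite) nn_integral_PiE_prod:
  assumes "finite I" and B: "\<And>k. k \<in> I \<Longrightarrow> B k \<in> sets (M k)"
    and f: "\<And>k. k \<in> I \<Longrightarrow> f k \<in> borel_measurable (M k)"
    and f_nonneg: "\<And>k v. k \<in> I \<Longrightarrow> v \<in> B k \<Longrightarrow> 0 \<le> f k v"
  shows "(\<integral>\<^sup>+y. ennreal (indicator (PiE I B) y * (\<Prod>k\<in>I. f k (y k))) \<partial>PiM I M)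
       = (\<Prod>k\<in>I. \<integral>\<^sup>+v. ennreal (indicator (B k) v * f k v) \<partial>M k)"
proof -
  have "ennreal (indicator (PiE I B) y * (\<Prod>k\<in>I. f k (y k)))
      = (\<Prod>k\<in>I. ennreal (indicator (B k) (y k) * f k (y k)))" if "y \<in> extensional I" for y
  proof -
    have "indicator (PiE I B) y = (\<Prod>k\<in>I. indicator (B k) (y k) :: real)"
      using that \<open>finite I\<close> by (auto simp: indicator_def PiE_iff)
    then show ?thesis
      using f_nonneg by (simp add: prod.distrib[symmetric] prod_ennreal indicator_def)
  qed
  then have "(\<integral>\<^sup>+y. ennreal (indicator (PiE I B) y * (\<Prod>k\<in>I. f k (y k))) \<partial>PiM I M)
      = (\<integral>\<^sup>+y. (\<Prod>k\<in>I. ennreal (indicator (B k) (y k) * f k (y k))) \<partial>PiM I M)"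
    by (intro nn_integral_cong) (simp add: space_PiM PiE_def)
  also have "\<dots> = (\<Prod>k\<in>I. \<integral>\<^sup>+v. ennreal (indicator (B k) v * f k v) \<partial>M k)"
    using \<open>finite I\<close> B f by (intro product_nn_integral_prod) auto
  finally show ?thesis .
qed

lemma indicator_PiE_fun_upd:
  assumes "i \<notin> I" "y \<in> extensional I"
  shows "indicator (PiE (insert i I) B) (y(i := u)) = (indicator (B i) u * indicator (PiE I B) y :: 'c::semiring_1)"
  using assms by (auto simp: indicator_def PiE_iff extensional_def)

lemma nn_integral_gaussian_moment_odd_pos:
  "(\<integral>\<^sup>+x. ennreal (indicator {0..} x * (x ^ (2 * k + 1) * exp (- x\<^sup>2 / 2))) \<partial>lborel)
     = ennreal (2 ^ k * fact k)"
proof -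
  let ?f = "\<lambda>x::real. indicator {0..} x *\<^sub>R (exp (- x\<^sup>2) * x ^ (2 * k + 1))"
  have "has_bochner_integral lborel ?f (fact k / 2)"
    by (rule gaussian_moment_odd_pos)
  then have "has_bochner_integral lborel (\<lambda>x. ?f (0 + (1 / sqrt 2) * x)) ((fact k / 2) /\<^sub>R \<bar>1 / sqrt 2\<bar>)"
    by (subst lborel_has_bochner_integral_real_affine_iff[symmetric]) auto
  then have "has_bochner_integral lborel (\<lambda>x. (2 ^ k * sqrt 2) * ?f (0 + (1 / sqrt 2) * x))
      ((2 ^ k * sqrt 2) * ((fact k / 2) /\<^sub>R \<bar>1 / sqrt 2\<bar>))"
    by (rule has_bochner_integral_mult_right)
  moreover have "(sqrt 2 ^ k)\<^sup>2 = (2::real) ^ k"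
    by (simp add: power_mult[symmetric] mult.commute[of k 2] power_mult)
  moreover have "sqrt 2 * (sqrt 2 * y) = 2 * (y::real)" for y
    by (simp add: mult.assoc[symmetric])
  ultimately have "has_bochner_integral lborel
      (\<lambda>x::real. indicator {0..} x * (x ^ (2 * k + 1) * exp (- x\<^sup>2 / 2))) (2 ^ k * fact k)"
    by (simp add: indicator_def zero_le_mult_iff power_mult_distrib power_divide power_mult
        field_simps cong: if_cong)
  then show ?thesis
    by (subst nn_integral_eq_integral) (auto simp: has_bochner_integral_iff indicator_def)
qed

lemma set_integral_half_normal_mean:
  assumes "0 < s"
  shows "(LINT x:{0..}|lborel. x * normal_density 0 s x) = s / sqrt (2 * pi)"
proof -
  define c where "c = 1 / (sqrt 2 * s)"
  let ?f = "\<lambda>x::real. indicator {0..} x *\<^sub>R (exp (- x\<^sup>2) * x)"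
  have "0 < c"
    using assms by (simp add: c_def)
  have "has_bochner_integral lborel ?f (1 / 2)"
    by (rule gaussian_moment_1)
  then have "has_bochner_integral lborel (\<lambda>x. ?f (0 + c * x)) ((1 / 2) /\<^sub>R \<bar>c\<bar>)"
    using \<open>0 < c\<close> by (subst lborel_has_bochner_integral_real_affine_iff[symmetric]) auto
  then have "has_bochner_integral lborel (\<lambda>x. (1 / sqrt pi) * ?f (0 + c * x))
      ((1 / sqrt pi) * ((1 / 2) /\<^sub>R \<bar>c\<bar>))"
    by (rule has_bochner_integral_mult_right)
  moreover have "(1 / sqrt pi) * ?f (0 + c * x) = indicator {0..} x *\<^sub>R (x * normal_density 0 s x)" for x
    using \<open>0 < c\<close> assms
    by (simp add: c_def normal_density_def indicator_def zero_le_mult_iff power_mult_distrib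
        real_sqrt_mult field_simps)
  moreover have "(1 / sqrt pi) * ((1 / 2) /\<^sub>R \<bar>c\<bar>) = s / sqrt (2 * pi)"
    using \<open>0 < c\<close> assms by (simp add: c_def real_sqrt_mult field_simps)
  ultimately show ?thesis
    unfolding set_lebesgue_integral_def by (simp add: has_bochner_integral_integral_eq)
qed

lemma bessel_I0_summable: "summable (\<lambda>n. (x / 2) ^ (2 * n) / (fact n)\<^sup>2 :: real)"
proof (rule summable_comparison_test')
  show "summable (\<lambda>n. (x\<^sup>2 / 4) ^ n / fact n)"
    using summable_exp[of "x\<^sup>2 / 4"] by (simp add: field_simps)
  fix n
  have "(x / 2) ^ (2 * n) = (x\<^sup>2 / 4) ^ n"
    by (simp add: power_mult power_divide)
  moreover have "(x\<^sup>2 / 4) ^ n / (fact n)\<^sup>2 \<le> (x\<^sup>2 / 4) ^ n / fact n"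
    by (rule divide_left_mono) (auto simp: power2_eq_square)
  ultimately show "norm ((x / 2) ^ (2 * n) / (fact n)\<^sup>2) \<le> (x\<^sup>2 / 4) ^ n / fact n"
    by simp
qed

lemma bessel_I0_sums: "(\<lambda>n. (x / 2) ^ (2 * n) / (fact n)\<^sup>2) sums bessel_I0 x"
  unfolding bessel_I0_def using bessel_I0_summable by (rule summable_sums)

lemma bessel_I0_nonneg: "0 \<le> bessel_I0 x"
  unfolding bessel_I0_def by (rule suminf_nonneg[OF bessel_I0_summable]) (simp add: power_mult)

lemma bessel_I0_0 [simp]: "bessel_I0 0 = 1"
proof -
  have "(\<lambda>n. (0 / 2 :: real) ^ (2 * n) / (fact n)\<^sup>2) = (\<lambda>n. if n = 0 then 1 else 0)"
    by (auto simp: fun_eq_iff)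
  then show ?thesis
    using sums_unique[OF sums_single[of 0 "\<lambda>_. 1::real"]] by (simp add: bessel_I0_def)
qed

lemma borel_measurable_bessel_I0 [measurable]: "bessel_I0 \<in> borel_measurable borel"
proof (rule borel_measurable_LIMSEQ_metric)
  show "(\<lambda>x::real. \<Sum>n<i. (x / 2) ^ (2 * n) / (fact n)\<^sup>2) \<in> borel_measurable borel" for i
    by measurable
  show "(\<lambda>i. \<Sum>n<i. (x / 2) ^ (2 * n) / (fact n)\<^sup>2) \<longlonglongrightarrow> bessel_I0 x" for x
    using bessel_I0_sums by (rule sums_def[THEN iffD1])
qed

section \<open>The Rice distribution and the Marcum \<open>Q\<close>-function\<close>

definition rice_pdf :: "real \<Rightarrow> real \<Rightarrow> real" where
  "rice_pdf a t = t * exp (- (t\<^sup>2 + a\<^sup>2) / 2) * bessel_I0 (a * t)"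

lemma rice_pdf_nonneg: "0 \<le> t \<Longrightarrow> 0 \<le> rice_pdf a t"
  unfolding rice_pdf_def by (simp add: bessel_I0_nonneg)

lemma borel_measurable_rice_pdf [measurable]: "rice_pdf a \<in> borel_measurable borel"
  unfolding rice_pdf_def by measurable

lemma rice_pdf_sums:
  "(\<lambda>n. exp (- a\<^sup>2 / 2) * (a / 2) ^ (2 * n) / (fact n)\<^sup>2 * (t ^ (2 * n + 1) * exp (- t\<^sup>2 / 2)))
     sums rice_pdf a t"
proof -
  have "exp (- (t\<^sup>2 + a\<^sup>2) / 2) = exp (- a\<^sup>2 / 2) * exp (- t\<^sup>2 / 2)"
    by (simp add: exp_add[symmetric] field_simps)
  then have term_eq: "t * exp (- (t\<^sup>2 + a\<^sup>2) / 2) * ((a * t / 2) ^ (2 * n) / (fact n)\<^sup>2)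
      = exp (- a\<^sup>2 / 2) * (a / 2) ^ (2 * n) / (fact n)\<^sup>2 * (t ^ (2 * n + 1) * exp (- t\<^sup>2 / 2))" for n
    by (simp add: power_mult_distrib field_simps)
  show ?thesis
    using sums_mult[OF bessel_I0_sums, of "t * exp (- (t\<^sup>2 + a\<^sup>2) / 2)" "a * t"]
    unfolding rice_pdf_def term_eq .
qed

text \<open>Expanding \<open>I\<^sub>0\<close> in its power series, the \<open>n\<close>-th term integrates to
  \<open>exp (-a\<^sup>2/2) (a\<^sup>2/2)\<^sup>n / n!\<close>, and these terms sum to \<open>1\<close>.\<close>

lemma nn_integral_rice_pdf: "(\<integral>\<^sup>+t. ennreal (indicator {0..} t * rice_pdf a t) \<partial>lborel) = 1"
proof -
  define c where "c n = exp (- a\<^sup>2 / 2) * (a / 2) ^ (2 * n) / (fact n)\<^sup>2" for n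
  define g where "g n = (\<lambda>t::real. indicator {0..} t * (t ^ (2 * n + 1) * exp (- t\<^sup>2 / 2)))" for n
  have c_nonneg: "0 \<le> c n" for n
    unfolding c_def by (simp add: power_mult)
  have g_nonneg: "0 \<le> g n t" for n t
    unfolding g_def by (simp add: indicator_def)
  have "ennreal (indicator {0..} t * rice_pdf a t) = (\<Sum>n. ennreal (c n) * ennreal (g n t))" for t
  proof -
    have "(\<lambda>n. c n * g n t) sums (indicator {0..} t * rice_pdf a t)"
      using sums_mult[OF rice_pdf_sums[of a t], of "indicator {0..} t"]
      by (simp add: c_def g_def ac_simps)
    then show ?thesis
      by (simp add: ennreal_mult'[symmetric] c_nonneg g_nonneg suminf_ennreal2 sums_iff)
  qed
  then have "(\<integral>\<^sup>+t. ennreal (indicator {0..} t * rice_pdf a t) \<partial>lborel)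
      = (\<Sum>n. \<integral>\<^sup>+t. ennreal (c n) * ennreal (g n t) \<partial>lborel)"
    by (simp add: nn_integral_suminf g_def)
  also have "\<dots> = (\<Sum>n. ennreal (c n * (2 ^ n * fact n)))"
  proof -
    have "g n \<in> borel_measurable lborel" for n
      unfolding g_def by measurable
    moreover have "(\<integral>\<^sup>+t. ennreal (g n t) \<partial>lborel) = ennreal (2 ^ n * fact n)" for n
      unfolding g_def by (rule nn_integral_gaussian_moment_odd_pos)
    ultimately show ?thesis
      by (simp add: nn_integral_cmult ennreal_mult' c_nonneg)
  qed
  also have "\<dots> = ennreal (exp (- a\<^sup>2 / 2) * exp (a\<^sup>2 / 2))"
  proof -
    have term_eq: "c n * (2 ^ n * fact n) = exp (- a\<^sup>2 / 2) * ((a\<^sup>2 / 2) ^ n /\<^sub>R fact n)" for n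
      by (simp add: c_def power_mult power_divide power2_eq_square field_simps)
    have "(\<lambda>n. c n * (2 ^ n * fact n)) sums (exp (- a\<^sup>2 / 2) * exp (a\<^sup>2 / 2))"
      unfolding term_eq by (rule sums_mult[OF exp_converges])
    then show ?thesis
      by (subst suminf_ennreal2) (auto simp: sums_iff c_nonneg)
  qed
  finally show ?thesis
    by (simp add: exp_add[symmetric])
qed

lemma nn_integral_rice_pdf_split:
  assumes "0 \<le> b"
  shows "(\<integral>\<^sup>+t. ennreal (indicator {0..b} t * rice_pdf a t) \<partial>lborel)
       + (\<integral>\<^sup>+t. ennreal (indicator {b<..} t * rice_pdf a t) \<partial>lborel) = 1"
proof -
  have "(\<integral>\<^sup>+t. ennreal (indicator {0..b} t * rice_pdf a t) \<partial>lborel)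
       + (\<integral>\<^sup>+t. ennreal (indicator {b<..} t * rice_pdf a t) \<partial>lborel)
     = (\<integral>\<^sup>+t. ennreal (indicator {0..b} t * rice_pdf a t) + ennreal (indicator {b<..} t * rice_pdf a t) \<partial>lborel)"
    by (rule nn_integral_add[symmetric]) auto
  also have "\<dots> = (\<integral>\<^sup>+t. ennreal (indicator {0..} t * rice_pdf a t) \<partial>lborel)"
    using assms by (intro nn_integral_cong) (auto simp: indicator_def rice_pdf_nonneg)
  finally show ?thesis
    by (simp only: nn_integral_rice_pdf)
qed

lemma marcum_Q1_eq_enn2real:
  assumes "0 \<le> b"
  shows "marcum_Q1 a b = enn2real (\<integral>\<^sup>+t. ennreal (indicator {b<..} t * rice_pdf a t) \<partial>lborel)"
proof -
  have "marcum_Q1 a b = enn2real (\<integral>\<^sup>+t. ennreal (indicator {b..} t * rice_pdf a t) \<partial>lborel)"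
    unfolding marcum_Q1_def rice_pdf_def[symmetric] using assms
    by (intro set_integral_nonneg_eq_nn_integral) (auto intro: rice_pdf_nonneg)
  also have "(\<integral>\<^sup>+t. ennreal (indicator {b..} t * rice_pdf a t) \<partial>lborel)
      = (\<integral>\<^sup>+t. ennreal (indicator {b<..} t * rice_pdf a t) \<partial>lborel)"
    by (intro nn_integral_cong_AE eventually_mono[OF AE_lborel_singleton[of b]])
       (auto simp: indicator_def)
  finally show ?thesis .
qed

lemma ennreal_marcum_Q1:
  assumes "0 \<le> b"
  shows "ennreal (marcum_Q1 a b) = (\<integral>\<^sup>+t. ennreal (indicator {b<..} t * rice_pdf a t) \<partial>lborel)"
proof -
  have "(\<integral>\<^sup>+t. ennreal (indicator {b<..} t * rice_pdf a t) \<partial>lborel) \<noteq> \<top>"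
    using nn_integral_rice_pdf_split[OF assms, of a] by auto
  then show ?thesis
    by (simp add: marcum_Q1_eq_enn2real[OF assms] less_top)
qed

lemma marcum_Q1_le_1:
  assumes "0 \<le> b"
  shows "marcum_Q1 a b \<le> 1"
proof -
  have "ennreal (marcum_Q1 a b)
      \<le> (\<integral>\<^sup>+t. ennreal (indicator {0..b} t * rice_pdf a t) \<partial>lborel) + ennreal (marcum_Q1 a b)"
    by (rule add_increasing) auto
  also have "\<dots> = 1"
    by (simp only: ennreal_marcum_Q1[OF assms] nn_integral_rice_pdf_split[OF assms])
  finally show ?thesis
    by simp
qed

lemma nn_integral_rice_pdf_Icc:
  assumes "0 \<le> b"
  shows "(\<integral>\<^sup>+t. ennreal (indicator {0..b} t * rice_pdf a t) \<partial>lborel) = ennreal (1 - marcum_Q1 a b)"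
    (is "?P = _")
proof -
  have "?P = ?P + ennreal (marcum_Q1 a b) - ennreal (marcum_Q1 a b)"
    by (simp add: ennreal_add_diff_cancel_right)
  also have "\<dots> = 1 - ennreal (marcum_Q1 a b)"
    by (simp add: ennreal_marcum_Q1[OF assms] nn_integral_rice_pdf_split[OF assms])
  also have "\<dots> = ennreal (1 - marcum_Q1 a b)"
    by (simp add: ennreal_minus marcum_Q1_eq_enn2real[OF assms] flip: ennreal_1)
  finally show ?thesis .
qed

section \<open>Conditional Rician densities of the ports\<close>

text \<open>The density of \<open>|h\<^sub>k|\<close> at \<open>v\<close> given \<open>|h\<^sub>1| = u\<close>, for correlation \<open>m\<close>; with \<open>m = 0\<close>
  it is the Rayleigh density of \<open>|h\<^sub>1|\<close>.\<close>

definition rician_pdf :: "real \<Rightarrow> real \<Rightarrow> real \<Rightarrow> real \<Rightarrow> real" where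
  "rician_pdf \<sigma> m u v = 2 * v / (\<sigma>\<^sup>2 * (1 - m\<^sup>2))
     * exp (- (v\<^sup>2 + m\<^sup>2 * u\<^sup>2) / (\<sigma>\<^sup>2 * (1 - m\<^sup>2)))
     * bessel_I0 (2 * m * u * v / (\<sigma>\<^sup>2 * (1 - m\<^sup>2)))"

definition rician_cdf :: "real \<Rightarrow> real \<Rightarrow> real \<Rightarrow> real \<Rightarrow> real" where
  "rician_cdf \<sigma> m u x = 1 - marcum_Q1 (sqrt (2 * m\<^sup>2 / (\<sigma>\<^sup>2 * (1 - m\<^sup>2))) * u)
                                        (sqrt (2 / (\<sigma>\<^sup>2 * (1 - m\<^sup>2))) * x)"

lemma rician_pdf_nonneg: "0 < \<sigma> \<Longrightarrow> m\<^sup>2 < 1 \<Longrightarrow> 0 \<le> v \<Longrightarrow> 0 \<le> rician_pdf \<sigma> m u v"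
  unfolding rician_pdf_def by (intro mult_nonneg_nonneg divide_nonneg_pos bessel_I0_nonneg) auto

lemma borel_measurable_rician_pdf [measurable (raw)]:
  assumes [measurable]: "f \<in> borel_measurable M" "g \<in> borel_measurable M"
  shows "(\<lambda>y. rician_pdf \<sigma> m (f y) (g y)) \<in> borel_measurable M"
  unfolding rician_pdf_def by measurable

lemma rician_pdf_0: "rician_pdf \<sigma> 0 u v = 2 * v / \<sigma>\<^sup>2 * exp (- v\<^sup>2 / \<sigma>\<^sup>2)"
  by (simp add: rician_pdf_def)

lemma rician_pdf_eq_rice_pdf:
  assumes "0 < \<sigma>" "m\<^sup>2 < 1" and r: "r = sqrt (2 / (\<sigma>\<^sup>2 * (1 - m\<^sup>2)))"
  shows "rician_pdf \<sigma> m u v = r * rice_pdf (m * r * u) (r * v)"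
proof -
  have c: "\<sigma>\<^sup>2 * (1 - m\<^sup>2) = 2 / r\<^sup>2" and "0 < r"
    using assms by (auto simp: field_simps)
  then show ?thesis
    unfolding rician_pdf_def rice_pdf_def c by (simp add: field_simps power2_eq_square)
qed

lemma nn_integral_rician_pdf:
  assumes "0 < \<sigma>" "0 \<le> m" "m < 1" "0 \<le> x"
  shows "(\<integral>\<^sup>+v. ennreal (indicator {0..x} v * rician_pdf \<sigma> m u v) \<partial>lborel) = ennreal (rician_cdf \<sigma> m u x)"
proof -
  define r where "r = sqrt (2 / (\<sigma>\<^sup>2 * (1 - m\<^sup>2)))"
  have m2: "m\<^sup>2 < 1"
    using assms by (simp add: power_less_one_iff abs_square_less_1)
  have "0 < r"
    using assms m2 unfolding r_def by simp
  have "sqrt (2 * m\<^sup>2 / (\<sigma>\<^sup>2 * (1 - m\<^sup>2))) = sqrt (m\<^sup>2) * r"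
    unfolding r_def real_sqrt_mult[symmetric] by (simp add: ac_simps)
  with assms have "ennreal (rician_cdf \<sigma> m u x) = ennreal (1 - marcum_Q1 (m * r * u) (r * x))"
    by (simp add: rician_cdf_def flip: r_def)
  also have "\<dots> = (\<integral>\<^sup>+t. ennreal (indicator {0..r * x} t * rice_pdf (m * r * u) t) \<partial>lborel)"
    using \<open>0 < r\<close> assms by (simp add: nn_integral_rice_pdf_Icc)
  also have "\<dots> = \<bar>r\<bar> * (\<integral>\<^sup>+v. ennreal (indicator {0..r * x} (0 + r * v) * rice_pdf (m * r * u) (0 + r * v)) \<partial>lborel)"
    using \<open>0 < r\<close> by (intro nn_integral_real_affine) auto
  also have "\<dots> = (\<integral>\<^sup>+v. ennreal r * ennreal (indicator {0..r * x} (r * v) * rice_pdf (m * r * u) (r * v)) \<partial>lborel)"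
    using \<open>0 < r\<close> by (subst nn_integral_cmult) auto
  also have "\<dots> = (\<integral>\<^sup>+v. ennreal (indicator {0..x} v * rician_pdf \<sigma> m u v) \<partial>lborel)"
    using \<open>0 < r\<close> m2 assms
    by (intro nn_integral_cong)
       (auto simp: ennreal_mult'[symmetric] indicator_def zero_le_mult_iff rician_pdf_eq_rice_pdf[OF _ _ r_def])
  finally show ?thesis ..
qed

lemma rician_cdf_nonneg: "0 \<le> m \<Longrightarrow> m < 1 \<Longrightarrow> 0 \<le> x \<Longrightarrow> 0 \<le> rician_cdf \<sigma> m u x"
  unfolding rician_cdf_def by (simp add: marcum_Q1_le_1 power_le_one)

lemma borel_measurable_rician_cdf:
  assumes "0 < \<sigma>" "0 \<le> m" "m < 1" "0 \<le> x"
  shows "(\<lambda>u. rician_cdf \<sigma> m u x) \<in> borel_measurable borel"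
proof -
  have "rician_cdf \<sigma> m u x = enn2real (\<integral>\<^sup>+v. ennreal (indicator {0..x} v * rician_pdf \<sigma> m u v) \<partial>lborel)" for u
    using assms by (simp add: nn_integral_rician_pdf rician_cdf_nonneg)
  then show ?thesis
    by simp
qed

lemma rician_pdf_0_mult_rician_pdf:
  assumes "0 < \<sigma>" "m\<^sup>2 < 1"
  shows "rician_pdf \<sigma> 0 u u * rician_pdf \<sigma> m u x
       = 2 * x / (\<sigma>\<^sup>2 * (1 - m\<^sup>2)) * exp (- x\<^sup>2 / (\<sigma>\<^sup>2 * (1 - m\<^sup>2)))
         * (2 * u / \<sigma>\<^sup>2 * exp (- u\<^sup>2 / (\<sigma>\<^sup>2 * (1 - m\<^sup>2)))
            * bessel_I0 (2 * m * x * u / (\<sigma>\<^sup>2 * (1 - m\<^sup>2))))"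
proof -
  define c where "c = \<sigma>\<^sup>2 * (1 - m\<^sup>2)"
  have "c \<noteq> 0"
    using assms by (simp add: c_def)
  have "u\<^sup>2 / \<sigma>\<^sup>2 = (u\<^sup>2 - m\<^sup>2 * u\<^sup>2) / c"
    using assms by (simp add: c_def field_simps)
  then have "- u\<^sup>2 / \<sigma>\<^sup>2 + - (x\<^sup>2 + m\<^sup>2 * u\<^sup>2) / c = - x\<^sup>2 / c + - u\<^sup>2 / c"
    using \<open>c \<noteq> 0\<close> by (simp add: field_simps)
  then have "exp (- u\<^sup>2 / \<sigma>\<^sup>2) * exp (- (x\<^sup>2 + m\<^sup>2 * u\<^sup>2) / c) = exp (- x\<^sup>2 / c) * exp (- u\<^sup>2 / c)"
    by (simp only: exp_add[symmetric])
  then show ?thesis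
    unfolding rician_pdf_0 rician_pdf_def c_def[symmetric]
    by (simp add: ac_simps)
qed

lemma nn_integral_PiE_rician_pdf:
  fixes I :: "'i set"
  assumes "finite I" "0 < \<sigma>" "\<And>k. k \<in> I \<Longrightarrow> 0 \<le> mu k \<and> mu k < 1" "0 \<le> x"
  shows "(\<integral>\<^sup>+y. ennreal (indicator (PiE I (\<lambda>_. {0..x})) y * (\<Prod>k\<in>I. rician_pdf \<sigma> (mu k) u (y k)))
            \<partial>PiM I (\<lambda>_. lborel))
       = ennreal (\<Prod>k\<in>I. rician_cdf \<sigma> (mu k) u x)"
proof -
  interpret product_sigma_finite "\<lambda>_::'i. lborel :: real measure"
    by standard
  have "(\<integral>\<^sup>+y. ennreal (indicator (PiE I (\<lambda>_. {0..x})) y * (\<Prod>k\<in>I. rician_pdf \<sigma> (mu k) u (y k)))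
            \<partial>PiM I (\<lambda>_. lborel))
      = (\<Prod>k\<in>I. \<integral>\<^sup>+v. ennreal (indicator {0..x} v * rician_pdf \<sigma> (mu k) u v) \<partial>lborel)"
    using assms by (intro nn_integral_PiE_prod) (auto intro!: rician_pdf_nonneg simp: abs_square_less_1)
  also have "\<dots> = (\<Prod>k\<in>I. ennreal (rician_cdf \<sigma> (mu k) u x))"
    using assms by (intro prod.cong refl nn_integral_rician_pdf) auto
  also have "\<dots> = ennreal (\<Prod>k\<in>I. rician_cdf \<sigma> (mu k) u x)"
    using assms by (intro prod_ennreal rician_cdf_nonneg) auto
  finally show ?thesis .
qed

section \<open>The level crossing rate\<close>

lemma fas_env_pdf_eq_prod:
  "fas_env_pdf N \<sigma> mu x = (\<Prod>k\<in>{1..N}. rician_pdf \<sigma> (fas_mu mu k) (x 1) (x k))"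
  by (simp add: fas_env_pdf_def rician_pdf_def Let_def)

lemma fas_env_pdf_factor:
  assumes "1 \<le> N"
  shows "fas_env_pdf N \<sigma> mu x
       = rician_pdf \<sigma> 0 (x 1) (x 1) * (\<Prod>k\<in>{2..N}. rician_pdf \<sigma> (mu k) (x 1) (x k))"
proof -
  have "(\<Prod>k\<in>{2..N}. rician_pdf \<sigma> (fas_mu mu k) (x 1) (x k))
      = (\<Prod>k\<in>{2..N}. rician_pdf \<sigma> (mu k) (x 1) (x k))"
    by (intro prod.cong) (auto simp: fas_mu_def)
  moreover have "{1..N} = insert 1 {2..N}"
    using assms by auto
  moreover have "fas_mu mu 1 = 0"
    by (simp add: fas_mu_def)
  ultimately show ?thesis
    unfolding fas_env_pdf_eq_prod by simp
qed

lemma fas_env_pdf_nonneg: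
  assumes "0 < \<sigma>" "\<And>k. k \<in> {2..N} \<Longrightarrow> 0 \<le> mu k \<and> mu k < 1" "\<And>k. k \<in> {1..N} \<Longrightarrow> 0 \<le> x k"
  shows "0 \<le> fas_env_pdf N \<sigma> mu x"
  unfolding fas_env_pdf_eq_prod using assms
  by (intro prod_nonneg rician_pdf_nonneg) (auto simp: fas_mu_def abs_square_less_1)

lemma borel_measurable_fas_env_pdf_fun_upd:
  assumes "{1..N} \<subseteq> insert i J"
  shows "(\<lambda>y. fas_env_pdf N \<sigma> mu (y(i := x))) \<in> borel_measurable (PiM J (\<lambda>_. lborel))"
proof -
  have component: "(\<lambda>y. (y(i := x)) k) \<in> borel_measurable (PiM J (\<lambda>_. lborel))"
    if "k \<in> {1..N}" for k
    using that assms measurable_component_singleton[of k J "\<lambda>_. lborel"]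
    by (cases "k = i") (auto simp: measurable_lborel1)
  show ?thesis
    unfolding fas_env_pdf_eq_prod
  proof (intro borel_measurable_prod borel_measurable_rician_pdf)
    fix k assume "k \<in> {1..N}"
    then show "(\<lambda>y. (y(i := x)) 1) \<in> borel_measurable (PiM J (\<lambda>_. lborel))"
      by (intro component) simp
    show "(\<lambda>y. (y(i := x)) k) \<in> borel_measurable (PiM J (\<lambda>_. lborel))"
      using \<open>k \<in> {1..N}\<close> by (rule component)
  qed
qed

text \<open>The density of the event that \<open>|h\<^sub>i| = x\<close> while all other envelopes stay in \<open>[0, x]\<close>:
  the \<open>i\<close>-th summand of \<open>fas_joint_pdf\<close> without its derivative factor.\<close>

definition fas_port_density :: "nat \<Rightarrow> real \<Rightarrow> (nat \<Rightarrow> real) \<Rightarrow> nat \<Rightarrow> real \<Rightarrow> real" where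
  "fas_port_density N \<sigma> mu i x =
     (LINT y:(PiE ({1..N} - {i}) (\<lambda>_. {0..x}))|(PiM ({1..N} - {i}) (\<lambda>_. lborel)).
        fas_env_pdf N \<sigma> mu (y(i := x)))"

lemma fas_lcr_eq_sum_port_density:
  assumes "0 < \<sigma>" "0 < fD"
  shows "fas_lcr N \<sigma> fD mu x
       = pi * \<sigma> * fD / sqrt (2 * pi) * (\<Sum>i\<in>{1..N}. fas_port_density N \<sigma> mu i x)"
proof -
  have integrand: "xd * fas_joint_pdf N \<sigma> fD mu xd x
      = (\<Sum>i\<in>{1..N}. fas_port_density N \<sigma> mu i x) * (xd * normal_density 0 (pi * \<sigma> * fD) xd)" for xd
    by (simp add: fas_joint_pdf_def fas_port_density_def sum_distrib_left sum_distrib_right ac_simps)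
  show ?thesis
    unfolding fas_lcr_def integrand
    using assms by (simp add: set_integral_half_normal_mean)
qed

lemma fas_port_density_eq_nn_integral:
  assumes "0 < \<sigma>" "\<And>k. k \<in> {2..N} \<Longrightarrow> 0 \<le> mu k \<and> mu k < 1" "0 \<le> x"
  shows "fas_port_density N \<sigma> mu i x = enn2real (\<integral>\<^sup>+y.
     ennreal (indicator (PiE ({1..N} - {i}) (\<lambda>_. {0..x})) y * fas_env_pdf N \<sigma> mu (y(i := x)))
     \<partial>PiM ({1..N} - {i}) (\<lambda>_. lborel))"
  unfolding fas_port_density_def
proof (rule set_integral_nonneg_eq_nn_integral)
  show "PiE ({1..N} - {i}) (\<lambda>_. {0..x}) \<in> sets (PiM ({1..N} - {i}) (\<lambda>_. lborel))"
    by (rule sets_PiM_I_finite) auto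
  show "(\<lambda>y. fas_env_pdf N \<sigma> mu (y(i := x))) \<in> borel_measurable (PiM ({1..N} - {i}) (\<lambda>_. lborel))"
    by (rule borel_measurable_fas_env_pdf_fun_upd) auto
  show "0 \<le> fas_env_pdf N \<sigma> mu (y(i := x))" if "y \<in> PiE ({1..N} - {i}) (\<lambda>_. {0..x})" for y
    using that assms by (intro fas_env_pdf_nonneg) (auto simp: PiE_iff)
qed

lemma fas_port_density_1:
  assumes "1 \<le> N" "0 < \<sigma>" "\<And>k. k \<in> {2..N} \<Longrightarrow> 0 \<le> mu k \<and> mu k < 1" "0 \<le> x"
  shows "fas_port_density N \<sigma> mu 1 x
       = 2 * x / \<sigma>\<^sup>2 * (exp (- x\<^sup>2 / \<sigma>\<^sup>2) * (\<Prod>k\<in>{2..N}. rician_cdf \<sigma> (mu k) x x))"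
proof -
  let ?box = "PiE {2..N} (\<lambda>_. {0..x})"
  have ports: "{1..N} - {1} = {2..N}"
    by auto
  have pdf_nonneg: "0 \<le> rician_pdf \<sigma> 0 x x"
    using assms by (intro rician_pdf_nonneg) auto
  have cdf_nonneg: "0 \<le> (\<Prod>k\<in>{2..N}. rician_cdf \<sigma> (mu k) x x)"
    using assms by (intro prod_nonneg rician_cdf_nonneg) auto
  have "fas_port_density N \<sigma> mu 1 x
      = enn2real (\<integral>\<^sup>+y. ennreal (indicator ?box y * fas_env_pdf N \<sigma> mu (y(1 := x))) \<partial>PiM {2..N} (\<lambda>_. lborel))"
    using fas_port_density_eq_nn_integral[where i=1, OF assms(2-4)] by (simp only: ports)
  also have "(\<integral>\<^sup>+y. ennreal (indicator ?box y * fas_env_pdf N \<sigma> mu (y(1 := x))) \<partial>PiM {2..N} (\<lambda>_. lborel))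
      = (\<integral>\<^sup>+y. ennreal (rician_pdf \<sigma> 0 x x)
          * ennreal (indicator ?box y * (\<Prod>k\<in>{2..N}. rician_pdf \<sigma> (mu k) x (y k))) \<partial>PiM {2..N} (\<lambda>_. lborel))"
  proof (rule nn_integral_cong)
    fix y :: "nat \<Rightarrow> real"
    have "(\<Prod>k\<in>{2..N}. rician_pdf \<sigma> (mu k) x ((y(1 := x)) k))
        = (\<Prod>k\<in>{2..N}. rician_pdf \<sigma> (mu k) x (y k))"
      by (intro prod.cong) auto
    then show "ennreal (indicator ?box y * fas_env_pdf N \<sigma> mu (y(1 := x)))
        = ennreal (rician_pdf \<sigma> 0 x x)
          * ennreal (indicator ?box y * (\<Prod>k\<in>{2..N}. rician_pdf \<sigma> (mu k) x (y k)))"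
      using assms pdf_nonneg by (simp add: fas_env_pdf_factor ennreal_mult'[symmetric] ac_simps)
  qed
  also have "\<dots> = ennreal (rician_pdf \<sigma> 0 x x) * (\<integral>\<^sup>+y. ennreal (indicator ?box y
      * (\<Prod>k\<in>{2..N}. rician_pdf \<sigma> (mu k) x (y k))) \<partial>PiM {2..N} (\<lambda>_. lborel))"
    by (rule nn_integral_cmult) measurable
  also have "\<dots> = ennreal (rician_pdf \<sigma> 0 x x) * ennreal (\<Prod>k\<in>{2..N}. rician_cdf \<sigma> (mu k) x x)"
    using assms by (subst nn_integral_PiE_rician_pdf) auto
  also have "\<dots> = ennreal (rician_pdf \<sigma> 0 x x * (\<Prod>k\<in>{2..N}. rician_cdf \<sigma> (mu k) x x))"
    using pdf_nonneg by (simp add: ennreal_mult')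
  finally have "fas_port_density N \<sigma> mu 1 x = rician_pdf \<sigma> 0 x x * (\<Prod>k\<in>{2..N}. rician_cdf \<sigma> (mu k) x x)"
    using pdf_nonneg cdf_nonneg by simp
  then show ?thesis
    by (simp add: rician_pdf_0 mult.assoc)
qed

lemma nn_integral_fas_env_pdf_given_port1:
  assumes "0 < \<sigma>" "\<And>k. k \<in> {2..N} \<Longrightarrow> 0 \<le> mu k \<and> mu k < 1" "0 \<le> x" "i \<in> {2..N}"
  defines "I \<equiv> {2..N} - {i}"
  shows "(\<integral>\<^sup>+y. ennreal (indicator (PiE (insert 1 I) (\<lambda>_. {0..x})) (y(1 := u))
              * fas_env_pdf N \<sigma> mu ((y(1 := u))(i := x))) \<partial>PiM I (\<lambda>_. lborel))
       = ennreal (indicator {0..x} u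
           * (rician_pdf \<sigma> 0 u u * rician_pdf \<sigma> (mu i) u x * (\<Prod>k\<in>I. rician_cdf \<sigma> (mu k) u x)))"
proof -
  interpret product_sigma_finite "\<lambda>_::nat. lborel :: real measure"
    by standard
  define G where "G = indicator {0..x} u * (rician_pdf \<sigma> 0 u u * rician_pdf \<sigma> (mu i) u x)"
  have I: "{2..N} = insert i I" "finite I" "1 \<notin> I" "i \<notin> I" "i \<noteq> 1" and "1 \<le> N"
    using assms(4) by (auto simp: I_def)
  have mu_I: "0 \<le> mu k \<and> mu k < 1" if "k \<in> I" for k
    using assms(2) that by (auto simp: I_def)
  have "0 \<le> G"
    using assms by (auto simp: G_def indicator_def abs_square_less_1 intro!: mult_nonneg_nonneg rician_pdf_nonneg)
  have "ennreal (indicator (PiE (insert 1 I) (\<lambda>_. {0..x})) (y(1 := u)) * fas_env_pdf N \<sigma> mu ((y(1 := u))(i := x)))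
      = ennreal G * ennreal (indicator (PiE I (\<lambda>_. {0..x})) y * (\<Prod>k\<in>I. rician_pdf \<sigma> (mu k) u (y k)))"
    if "y \<in> space (PiM I (\<lambda>_. lborel))" for y
  proof -
    have "indicator (PiE (insert 1 I) (\<lambda>_. {0..x})) (y(1 := u))
        = (indicator {0..x} u * indicator (PiE I (\<lambda>_. {0..x})) y :: real)"
      using that I by (intro indicator_PiE_fun_upd) (auto simp: space_PiM PiE_iff)
    moreover have "(\<Prod>k\<in>I. rician_pdf \<sigma> (mu k) u (((y(1 := u))(i := x)) k))
        = (\<Prod>k\<in>I. rician_pdf \<sigma> (mu k) u (y k))"
      using I by (intro prod.cong) auto
    ultimately have "indicator (PiE (insert 1 I) (\<lambda>_. {0..x})) (y(1 := u))
        * fas_env_pdf N \<sigma> mu ((y(1 := u))(i := x))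
        = G * (indicator (PiE I (\<lambda>_. {0..x})) y * (\<Prod>k\<in>I. rician_pdf \<sigma> (mu k) u (y k)))"
      using I \<open>1 \<le> N\<close> by (simp add: fas_env_pdf_factor G_def ac_simps)
    then show ?thesis
      using \<open>0 \<le> G\<close> by (simp add: ennreal_mult')
  qed
  then have "(\<integral>\<^sup>+y. ennreal (indicator (PiE (insert 1 I) (\<lambda>_. {0..x})) (y(1 := u))
              * fas_env_pdf N \<sigma> mu ((y(1 := u))(i := x))) \<partial>PiM I (\<lambda>_. lborel))
      = (\<integral>\<^sup>+y. ennreal G * ennreal (indicator (PiE I (\<lambda>_. {0..x})) y
          * (\<Prod>k\<in>I. rician_pdf \<sigma> (mu k) u (y k))) \<partial>PiM I (\<lambda>_. lborel))"
    by (rule nn_integral_cong)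
  also have "\<dots> = ennreal G * (\<integral>\<^sup>+y. ennreal (indicator (PiE I (\<lambda>_. {0..x})) y
      * (\<Prod>k\<in>I. rician_pdf \<sigma> (mu k) u (y k))) \<partial>PiM I (\<lambda>_. lborel))"
    using I by (intro nn_integral_cmult) measurable
  also have "\<dots> = ennreal G * ennreal (\<Prod>k\<in>I. rician_cdf \<sigma> (mu k) u x)"
    using I mu_I assms(1,3) by (subst nn_integral_PiE_rician_pdf) auto
  also have "\<dots> = ennreal (G * (\<Prod>k\<in>I. rician_cdf \<sigma> (mu k) u x))"
    using \<open>0 \<le> G\<close> by (simp add: ennreal_mult')
  finally show ?thesis
    by (simp add: G_def ac_simps)
qed

lemma fas_port_density_other_eq_set_integral:
  assumes "0 < \<sigma>" "\<And>k. k \<in> {2..N} \<Longrightarrow> 0 \<le> mu k \<and> mu k < 1" "0 \<le> x" "i \<in> {2..N}"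
  shows "fas_port_density N \<sigma> mu i x = (LINT u:{0..x}|lborel.
     rician_pdf \<sigma> 0 u u * rician_pdf \<sigma> (mu i) u x * (\<Prod>k\<in>{2..N} - {i}. rician_cdf \<sigma> (mu k) u x))"
    (is "_ = (LINT u:{0..x}|lborel. ?H u)")
proof -
  interpret product_sigma_finite "\<lambda>_::nat. lborel :: real measure"
    by standard
  define I where "I = {2..N} - {i}"
  define F where "F = (\<lambda>y. ennreal (indicator (PiE (insert 1 I) (\<lambda>_. {0..x})) y * fas_env_pdf N \<sigma> mu (y(i := x))))"
  have I: "{1..N} - {i} = insert 1 I" "finite I" "1 \<notin> I"
    using assms(4) by (auto simp: I_def)
  have "fas_port_density N \<sigma> mu i x = enn2real (\<integral>\<^sup>+y. F y \<partial>PiM (insert 1 I) (\<lambda>_. lborel))"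
    unfolding F_def I(1)[symmetric] using assms(1-3) by (rule fas_port_density_eq_nn_integral)
  also have "(\<integral>\<^sup>+y. F y \<partial>PiM (insert 1 I) (\<lambda>_. lborel))
      = (\<integral>\<^sup>+u. (\<integral>\<^sup>+y. F (y(1 := u)) \<partial>PiM I (\<lambda>_. lborel)) \<partial>lborel)"
  proof (rule product_nn_integral_insert_rev)
    have "PiE (insert 1 I) (\<lambda>_. {0..x}) \<in> sets (PiM (insert 1 I) (\<lambda>_. lborel))"
      using I by (intro sets_PiM_I_finite) auto
    moreover have "(\<lambda>y. fas_env_pdf N \<sigma> mu (y(i := x))) \<in> borel_measurable (PiM (insert 1 I) (\<lambda>_. lborel))"
      using I by (intro borel_measurable_fas_env_pdf_fun_upd) auto
    ultimately show "F \<in> borel_measurable (PiM (insert 1 I) (\<lambda>_. lborel))"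
      unfolding F_def by measurable
  qed (use I in auto)
  also have "\<dots> = (\<integral>\<^sup>+u. ennreal (indicator {0..x} u * ?H u) \<partial>lborel)"
    unfolding F_def I_def using assms by (intro nn_integral_cong nn_integral_fas_env_pdf_given_port1)
  also have "enn2real \<dots> = (LINT u:{0..x}|lborel. ?H u)"
  proof (rule set_integral_nonneg_eq_nn_integral[symmetric])
    show "?H \<in> borel_measurable lborel"
      using assms by (auto intro!: borel_measurable_times borel_measurable_prod borel_measurable_rician_cdf
          borel_measurable_rician_pdf)
    show "0 \<le> ?H u" if "u \<in> {0..x}" for u
      using that assms by (auto simp: abs_square_less_1
          intro!: mult_nonneg_nonneg prod_nonneg rician_cdf_nonneg rician_pdf_nonneg)
  qed auto
  finally show ?thesis .
qed

lemma fas_port_density_other: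
  assumes "0 < \<sigma>" "\<And>k. k \<in> {2..N} \<Longrightarrow> 0 \<le> mu k \<and> mu k < 1" "0 \<le> x" "i \<in> {2..N}"
  shows "fas_port_density N \<sigma> mu i x = 2 * x / \<sigma>\<^sup>2 *
      (1 / (1 - (mu i)\<^sup>2) * exp (- x\<^sup>2 / (\<sigma>\<^sup>2 * (1 - (mu i)\<^sup>2))) *
        (LINT u:{0..x}|lborel. 2 * u / \<sigma>\<^sup>2 * exp (- u\<^sup>2 / (\<sigma>\<^sup>2 * (1 - (mu i)\<^sup>2)))
           * bessel_I0 (2 * mu i * x * u / (\<sigma>\<^sup>2 * (1 - (mu i)\<^sup>2)))
           * (\<Prod>k\<in>{2..N} - {i}. rician_cdf \<sigma> (mu k) u x)))"
proof -
  have "(mu i)\<^sup>2 < 1"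
    using assms(2)[OF assms(4)] by (simp add: abs_square_less_1)
  have "fas_port_density N \<sigma> mu i x = (LINT u:{0..x}|lborel. rician_pdf \<sigma> 0 u u
      * rician_pdf \<sigma> (mu i) u x * (\<Prod>k\<in>{2..N} - {i}. rician_cdf \<sigma> (mu k) u x))"
    using assms by (rule fas_port_density_other_eq_set_integral)
  also have "\<dots> = (LINT u:{0..x}|lborel.
      2 * x / (\<sigma>\<^sup>2 * (1 - (mu i)\<^sup>2)) * exp (- x\<^sup>2 / (\<sigma>\<^sup>2 * (1 - (mu i)\<^sup>2))) *
        (2 * u / \<sigma>\<^sup>2 * exp (- u\<^sup>2 / (\<sigma>\<^sup>2 * (1 - (mu i)\<^sup>2)))
         * bessel_I0 (2 * mu i * x * u / (\<sigma>\<^sup>2 * (1 - (mu i)\<^sup>2)))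
         * (\<Prod>k\<in>{2..N} - {i}. rician_cdf \<sigma> (mu k) u x)))"
    by (simp only: rician_pdf_0_mult_rician_pdf[OF assms(1) \<open>(mu i)\<^sup>2 < 1\<close>] mult.assoc)
  also have "\<dots> = 2 * x / (\<sigma>\<^sup>2 * (1 - (mu i)\<^sup>2)) * exp (- x\<^sup>2 / (\<sigma>\<^sup>2 * (1 - (mu i)\<^sup>2))) *
      (LINT u:{0..x}|lborel. 2 * u / \<sigma>\<^sup>2 * exp (- u\<^sup>2 / (\<sigma>\<^sup>2 * (1 - (mu i)\<^sup>2)))
         * bessel_I0 (2 * mu i * x * u / (\<sigma>\<^sup>2 * (1 - (mu i)\<^sup>2)))
         * (\<Prod>k\<in>{2..N} - {i}. rician_cdf \<sigma> (mu k) u x))"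
    by (rule set_integral_mult_right)
  finally show ?thesis
    by (simp add: field_simps)
qed

theorem theorem1:
  fixes N :: nat and \<sigma> fD xth :: real and mu :: "nat \<Rightarrow> real"
  assumes "N \<ge> 2" and "\<sigma> > 0" and "fD > 0"
    and "\<And>k. k \<in> {2..N} \<Longrightarrow> 0 \<le> mu k \<and> mu k < 1"
    and "xth > 0"
  shows "fas_lcr N \<sigma> fD mu xth =
    sqrt (2 * pi) * xth * fD / \<sigma> *
    ( exp (- xth\<^sup>2 / \<sigma>\<^sup>2) *
        (\<Prod>k\<in>{2..N}. 1 - marcum_Q1 (sqrt (2 * (mu k)\<^sup>2 / (\<sigma>\<^sup>2 * (1 - (mu k)\<^sup>2))) * xth)
                                      (sqrt (2 / (\<sigma>\<^sup>2 * (1 - (mu k)\<^sup>2))) * xth))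
      + (\<Sum>i\<in>{2..N}. 1 / (1 - (mu i)\<^sup>2) * exp (- xth\<^sup>2 / (\<sigma>\<^sup>2 * (1 - (mu i)\<^sup>2))) *
          (LINT x1:{0..xth}|lborel.
             2 * x1 / \<sigma>\<^sup>2 * exp (- x1\<^sup>2 / (\<sigma>\<^sup>2 * (1 - (mu i)\<^sup>2)))
             * bessel_I0 (2 * mu i * xth * x1 / (\<sigma>\<^sup>2 * (1 - (mu i)\<^sup>2)))
             * (\<Prod>k\<in>{2..N} - {i}.
                  1 - marcum_Q1 (sqrt (2 * (mu k)\<^sup>2 / (\<sigma>\<^sup>2 * (1 - (mu k)\<^sup>2))) * x1)
                                (sqrt (2 / (\<sigma>\<^sup>2 * (1 - (mu k)\<^sup>2))) * xth)))))"
proof -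
  have "1 \<le> N" "0 \<le> xth" and ports: "{1..N} = insert 1 {2..N}"
    using assms(1,5) by auto
  then have "fas_lcr N \<sigma> fD mu xth = pi * \<sigma> * fD / sqrt (2 * pi) *
      (fas_port_density N \<sigma> mu 1 xth + (\<Sum>i\<in>{2..N}. fas_port_density N \<sigma> mu i xth))"
    using assms by (simp add: fas_lcr_eq_sum_port_density)
  also have "\<dots> = pi * \<sigma> * fD / sqrt (2 * pi) * (2 * xth / \<sigma>\<^sup>2) *
      (exp (- xth\<^sup>2 / \<sigma>\<^sup>2) * (\<Prod>k\<in>{2..N}. rician_cdf \<sigma> (mu k) xth xth)
       + (\<Sum>i\<in>{2..N}. 1 / (1 - (mu i)\<^sup>2) * exp (- xth\<^sup>2 / (\<sigma>\<^sup>2 * (1 - (mu i)\<^sup>2))) *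
          (LINT x1:{0..xth}|lborel.
             2 * x1 / \<sigma>\<^sup>2 * exp (- x1\<^sup>2 / (\<sigma>\<^sup>2 * (1 - (mu i)\<^sup>2)))
             * bessel_I0 (2 * mu i * xth * x1 / (\<sigma>\<^sup>2 * (1 - (mu i)\<^sup>2)))
             * (\<Prod>k\<in>{2..N} - {i}. rician_cdf \<sigma> (mu k) x1 xth))))"
    using \<open>1 \<le> N\<close> \<open>0 \<le> xth\<close>
    by (simp only: fas_port_density_1[OF _ assms(2,4)] sum.cong[OF refl fas_port_density_other[OF assms(2,4)]]
        sum_distrib_left[symmetric] distrib_left mult.assoc)
  also have "pi * \<sigma> * fD / sqrt (2 * pi) * (2 * xth / \<sigma>\<^sup>2) = sqrt (2 * pi) * xth * fD / \<sigma>"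
    using assms(2) by (simp add: field_simps power2_eq_square flip: real_sqrt_mult_self[of "2 * pi"])
  finally show ?thesis
    by (simp only: rician_cdf_def)
qed

end
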